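(* For $m>0$ and $n\ge 2$, the sparing number of the $(m,n)$-cone $C_{m,n}$ is $m$.
   Context: An $(m,n)$-cone $C_{m,n}$ is the graph whose vertex set is partitioned into sets $U$ and $S$, where the vertices of $U$ induce a cycle $C_m$, $S$ is an independent set with $|S|=n$, and every vertex of $S$ is adjacent to every vertex of $U$; i.e. $C_{m,n}=C_m+S$ (join). Let $\mathbb{N}_0$ be the set of non-negative integers; for $A,B\subseteq\mathbb{N}_0$, $A+B=\{a+b:a\in A,b\in B\}$. An integer additive set-indexer (IASI) of a graph $G$ is an injective map $f:V(G)\to\mathcal{P}(\mathbb{N}_0)$ such that $f^+:E(G)\to\mathcal{P}(\mathbb{N}_0)$, $f^+(uv)=f(u)+f(v)$, is injective. A weak IASI is an IASI with $|f^+(uv)|=\max(|f(u)|,|f(v)|)$ for every edge $uv$. An edge $e$ is mono-indexed if $|f^+(e)|=1$. The sparing number $\varphi(G)$ is the minimum number of mono-indexed edges over all weak IASIs of $G$. *)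

theory Defs
  imports Main "HOL-Library.Set_Algebras"
begin

text \<open>A graph is given by a vertex set V and a symmetric edge relation E
  (pairs (u,v) with u,v in V, u different from v).  The sumset of two sets
  of naturals is the library pointwise sum A + B (Set_Algebras).\<close>

definition iasi :: "'a set \<Rightarrow> ('a \<times> 'a) set \<Rightarrow> ('a \<Rightarrow> nat set) \<Rightarrow> bool" where
  "iasi V E f \<longleftrightarrow>
     (\<forall>v\<in>V. finite (f v) \<and> f v \<noteq> {}) \<and>
     inj_on f V \<and>
     (\<forall>(u,v)\<in>E. \<forall>(x,y)\<in>E. f u + f v = f x + f y \<longrightarrow> {u,v} = {x,y})"

definition weak_iasi :: "'a set \<Rightarrow> ('a \<times> 'a) set \<Rightarrow> ('a \<Rightarrow> nat set) \<Rightarrow> bool" where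
  "weak_iasi V E f \<longleftrightarrow> iasi V E f \<and>
     (\<forall>(u,v)\<in>E. card (f u + f v) = max (card (f u)) (card (f v)))"

definition mono_edges :: "('a \<times> 'a) set \<Rightarrow> ('a \<Rightarrow> nat set) \<Rightarrow> 'a set set" where
  "mono_edges E f = {{u,v} | u v. (u,v) \<in> E \<and> card (f u + f v) = 1}"

definition sparing_number :: "'a set \<Rightarrow> ('a \<times> 'a) set \<Rightarrow> nat" where
  "sparing_number V E = (LEAST k. \<exists>f. weak_iasi V E f \<and> card (mono_edges E f) = k)"

text \<open>The (m,n)-cone: cycle vertices Inl i (i < m), independent vertices Inr j (j < n).\<close>
definition cone_V :: "nat \<Rightarrow> nat \<Rightarrow> (nat + nat) set" where
  "cone_V m n = Inl ` {..<m} \<union> Inr ` {..<n}"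

definition cone_E :: "nat \<Rightarrow> nat \<Rightarrow> ((nat + nat) \<times> (nat + nat)) set" where
  "cone_E m n =
     {(Inl i, Inl j) | i j. i < m \<and> j < m \<and> (j = (i + 1) mod m \<or> i = (j + 1) mod m)}
   \<union> {(Inl i, Inr j) | i j. i < m \<and> j < n}
   \<union> {(Inr j, Inl i) | i j. i < m \<and> j < n}"

end

theory Submission
  imports Defs
begin

text \<open>In a weak IASI no edge joins two vertices whose labels both have at least two elements:
  adding a set of two or more naturals to a finite nonempty set strictly increases its size,
  contradicting |f u + f v| = max |f u| |f v|. So every edge has an end with a singleton label,
  and an edge with two such ends is mono-indexed.
  Write u_i for the cycle vertices and s_j for the independent ones. If some s_j has a
  non-singleton label, all u_i are singletons and the m cycle edges are mono-indexed. Otherwise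
  s_0 and s_1 are singletons, and sending u_i to the edge u_i s_0 when u_i is a singleton and to
  u_(i+1) s_1 otherwise yields m distinct mono-indexed edges. The bound is attained by the labels
  {2^i} on u_i and {0, j + 1} on s_j: only cycle edges get singleton sums, and sums over distinct
  edges differ by uniqueness of binary expansions.\<close>

lemma card_lt_card_set_plus:
  fixes A B :: "'a :: linordered_cancel_ab_semigroup_add set"
  assumes "finite A" "A \<noteq> {}" "finite B" "2 \<le> card B"
  shows "card A < card (A + B)"
proof -
  have "\<not> card B \<le> 1" using assms(4) by simp
  then obtain b0 b1 where b: "b0 \<in> B" "b1 \<in> B" "b0 < b1"
    using assms(3) by (metis One_nat_def card_le_Suc0_iff_eq linorder_neqE)
  define a0 where "a0 = Min A"
  have a0: "a0 \<in> A" "\<And>a. a \<in> A \<Longrightarrow> a0 \<le> a"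
    using assms(1,2) by (simp_all add: a0_def)
  have "a0 + b0 < a + b1" if "a \<in> A" for a
    using add_le_less_mono[OF a0(2)[OF that] b(3)] .
  then have "a0 + b0 \<notin> (\<lambda>a. a + b1) ` A"
    by (metis imageE less_irrefl)
  moreover have "insert (a0 + b0) ((\<lambda>a. a + b1) ` A) \<subseteq> A + B"
    using a0(1) b by (auto simp: set_plus_def)
  ultimately have "card A + 1 \<le> card (A + B)"
    using card_mono[OF finite_set_plus[OF assms(1,3)]] assms(1)
    by (metis Suc_eq_plus1 card_image card_insert_disjoint finite_imageI inj_on_def add_right_cancel)
  then show ?thesis by simp
qed

lemma weak_iasi_edge_card_eq_1:
  assumes "weak_iasi V E f" "E \<subseteq> V \<times> V" "(u, v) \<in> E"
  shows "card (f u) = 1 \<or> card (f v) = 1"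
proof (rule ccontr)
  assume "\<not> (card (f u) = 1 \<or> card (f v) = 1)"
  moreover have "finite (f u)" "f u \<noteq> {}" "finite (f v)" "f v \<noteq> {}"
    using assms by (auto simp: weak_iasi_def iasi_def)
  ultimately have "2 \<le> card (f u)" "2 \<le> card (f v)"
    using card_0_eq by fastforce+
  then have "card (f u) < card (f u + f v)" "card (f v) < card (f u + f v)"
    using card_lt_card_set_plus \<open>finite (f u)\<close> \<open>f u \<noteq> {}\<close> \<open>finite (f v)\<close> \<open>f v \<noteq> {}\<close>
    by (metis add.commute)+
  moreover have "card (f u + f v) = max (card (f u)) (card (f v))"
    using assms by (auto simp: weak_iasi_def)
  ultimately show False by linarith
qed

lemma mono_edgesI:
  assumes "(u, v) \<in> E" "card (f u) = 1" "card (f v) = 1"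
  shows "{u, v} \<in> mono_edges E f"
proof -
  obtain a b where "f u = {a}" "f v = {b}"
    using assms(2,3) by (meson card_1_singletonE)
  then have "card (f u + f v) = 1" by (simp add: set_plus_def)
  then show ?thesis using assms(1) by (auto simp: mono_edges_def)
qed

lemma finite_mono_edges: "finite E \<Longrightarrow> finite (mono_edges E f)"
  by (rule finite_subset[of _ "(\<lambda>(u, v). {u, v}) ` E"]) (auto simp: mono_edges_def)

lemma bit_pow2_add_pow2_iff:
  assumes "i \<noteq> j"
  shows "bit (2 ^ i + 2 ^ j :: nat) t \<longleftrightarrow> t = i \<or> t = j"
proof -
  have "and (2 ^ i :: nat) (2 ^ j) = 0"
    using assms by (auto simp: bit_eq_iff bit_simps)
  then show ?thesis
    by (simp add: disjunctive_add_eq_or bit_simps)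
qed

lemma pow2_add_pow2_eq_imp_eq:
  assumes "i \<noteq> j" "k \<noteq> l" "2 ^ i + 2 ^ j = (2 ^ k + 2 ^ l :: nat)"
  shows "{i, j} = {k, l}"
proof -
  have "t \<in> {i, j} \<longleftrightarrow> t \<in> {k, l}" for t
    using bit_pow2_add_pow2_iff[OF assms(1), of t] bit_pow2_add_pow2_iff[OF assms(2), of t] assms(3)
    by simp
  then show ?thesis by blast
qed

lemma Suc_mod_neq:
  assumes "1 < m" "i < (m::nat)"
  shows "(i + 1) mod m \<noteq> i"
proof (cases "i + 1 < m")
  case False
  then have "i + 1 = m" using assms(2) by simp
  then show ?thesis using assms(1) by simp
qed simp

lemma inj_on_Suc_mod: "inj_on (\<lambda>i. (i + 1) mod m) {..<m::nat}"
  by (rule inj_onI) (auto simp: mod_if split: if_splits)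

lemma Suc_mod_doubleton_inj:
  assumes "3 \<le> (m::nat)" "i < m" "j < m" "{i, (i + 1) mod m} = {j, (j + 1) mod m}"
  shows "i = j"
proof (rule ccontr)
  assume "i \<noteq> j"
  then have "i = (j + 1) mod m" "j = (i + 1) mod m"
    using assms(4) by (auto simp: doubleton_eq_iff)
  then show False
    using assms(1-3) by (auto simp: mod_if split: if_splits)
qed

definition cycle_edges :: "nat \<Rightarrow> (nat + nat) set set" where
  "cycle_edges m = (\<lambda>i. {Inl i, Inl ((i + 1) mod m)}) ` {..<m}"

lemma card_cycle_edges:
  assumes "3 \<le> m"
  shows "card (cycle_edges m) = m"
proof -
  have "inj_on (\<lambda>i. {Inl i, Inl ((i + 1) mod m)} :: (nat + nat) set) {..<m}"
  proof (rule inj_onI)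
    fix i j assume "i \<in> {..<m}" "j \<in> {..<m}"
      and "{Inl i, Inl ((i + 1) mod m)} = ({Inl j, Inl ((j + 1) mod m)} :: (nat + nat) set)"
    then have "Inl ` {i, (i + 1) mod m} = (Inl ` {j, (j + 1) mod m} :: (nat + nat) set)"
      by simp
    then have "{i, (i + 1) mod m} = {j, (j + 1) mod m}"
      by (simp only: inj_image_eq_iff[OF inj_Inl])
    then show "i = j"
      using Suc_mod_doubleton_inj[OF assms] \<open>i \<in> {..<m}\<close> \<open>j \<in> {..<m}\<close> by blast
  qed
  then show ?thesis by (simp add: cycle_edges_def card_image)
qed

lemma cycle_edge_in_cone_E: "i < m \<Longrightarrow> (Inl i, Inl ((i + 1) mod m)) \<in> cone_E m n"
  by (auto simp: cone_E_def)

lemma spoke_in_cone_E: "i < m \<Longrightarrow> j < n \<Longrightarrow> (Inl i, Inr j) \<in> cone_E m n"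
  by (auto simp: cone_E_def)

lemma cone_E_subset: "cone_E m n \<subseteq> cone_V m n \<times> cone_V m n"
  by (auto simp: cone_E_def cone_V_def)

lemma finite_cone_E: "finite (cone_E m n)"
  by (rule finite_subset[OF cone_E_subset]) (simp add: cone_V_def)

lemma cone_E_cases:
  assumes "1 < m" "(u, v) \<in> cone_E m n"
  obtains (cycle) i j where "u = Inl i" "v = Inl j" "i \<noteq> j" "{u, v} \<in> cycle_edges m"
  | (spoke) i j where "{u, v} = {Inl i, Inr j}"
  using assms(2) unfolding cone_E_def
proof (elim UnE CollectE exE conjE disjE)
  fix i j assume "(u, v) = (Inl i, Inl j)" "i < m" "j < m" "j = (i + 1) mod m"
  moreover have "i \<noteq> j" using Suc_mod_neq[OF assms(1) \<open>i < m\<close>] \<open>j = (i + 1) mod m\<close> by simp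
  ultimately show thesis
    by (intro cycle[of i j]) (auto simp: cycle_edges_def)
next
  fix i j assume "(u, v) = (Inl i, Inl j)" "i < m" "j < m" "i = (j + 1) mod m"
  moreover have "j \<noteq> i" using Suc_mod_neq[OF assms(1) \<open>j < m\<close>] \<open>i = (j + 1) mod m\<close> by simp
  ultimately show thesis
    by (intro cycle[of i j]) (auto simp: cycle_edges_def insert_commute)
qed (use spoke in \<open>auto simp: insert_commute\<close>)

theorem cone_mono_edges_lower_bound:
  assumes "3 \<le> m" "2 \<le> n" and f: "weak_iasi (cone_V m n) (cone_E m n) f"
  shows "m \<le> card (mono_edges (cone_E m n) f)"
proof -
  let ?M = "mono_edges (cone_E m n) f"
  have edge: "card (f u) = 1 \<or> card (f v) = 1" if "(u, v) \<in> cone_E m n" for u v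
    using weak_iasi_edge_card_eq_1[OF f cone_E_subset that] .
  have finite_M: "finite ?M" using finite_cone_E by (rule finite_mono_edges)
  show ?thesis
  proof (cases "\<exists>j<n. card (f (Inr j)) \<noteq> 1")
    case True
    then obtain j where "j < n" "card (f (Inr j)) \<noteq> 1" by blast
    then have "card (f (Inl i)) = 1" if "i < m" for i
      using edge[OF spoke_in_cone_E[OF that]] by blast
    then have "cycle_edges m \<subseteq> ?M"
      using assms(1) by (auto simp: cycle_edges_def intro!: mono_edgesI cycle_edge_in_cone_E[simplified])
    then show ?thesis
      using card_mono[OF finite_M] card_cycle_edges[OF assms(1)] by metis
  next
    case False
    then have s0: "card (f (Inr 0)) = 1" and s1: "card (f (Inr 1)) = 1"
      using assms(2) by auto
    let ?succ = "\<lambda>i. (i + 1) mod m"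
    define g where
      "g i = (if card (f (Inl i)) = 1 then {Inl i, Inr 0} else {Inl (?succ i), Inr (1::nat)})" for i
    have "g ` {..<m} \<subseteq> ?M"
    proof (clarify)
      fix i assume i: "i < m"
      show "g i \<in> ?M"
      proof (cases "card (f (Inl i)) = 1")
        case True
        then show ?thesis
          using mono_edgesI[OF spoke_in_cone_E[OF i] True s0] assms(2) by (simp add: g_def)
      next
        case False
        have "card (f (Inl (?succ i))) = 1"
          using edge[OF cycle_edge_in_cone_E[OF i]] False by blast
        moreover have "(Inl (?succ i), Inr 1) \<in> cone_E m n"
          using i assms(2) by (intro spoke_in_cone_E) simp_all
        ultimately have "{Inl (?succ i), Inr 1} \<in> ?M"
          using s1 by (intro mono_edgesI)
        then show ?thesis using False by (simp add: g_def)
      qed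
    qed
    moreover have "inj_on g {..<m}"
    proof (rule inj_onI)
      fix i j assume "i \<in> {..<m}" "j \<in> {..<m}" "g i = g j"
      then show "i = j"
        by (cases "card (f (Inl i)) = 1"; cases "card (f (Inl j)) = 1")
          (auto simp: g_def doubleton_eq_iff dest: inj_onD[OF inj_on_Suc_mod[simplified]])
    qed
    ultimately show ?thesis
      using card_inj_on_le[OF _ _ finite_M] by fastforce
  qed
qed

text \<open>\<open>Suc j\<close>, not \<open>j\<close>: the label \<open>{0, 0}\<close> of s_0 would be a singleton.\<close>
definition cone_label :: "nat + nat \<Rightarrow> nat set" where
  "cone_label x = (case x of Inl i \<Rightarrow> {2 ^ i} | Inr j \<Rightarrow> {0, Suc j})"

lemma cone_label_simps:
  "cone_label (Inl i) = {2 ^ i}" "cone_label (Inr j) = {0, Suc j}"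
  by (simp_all add: cone_label_def)

lemma card_cone_label:
  "card (cone_label (Inl i)) = 1" "card (cone_label (Inr j)) = 2"
  by (simp_all add: cone_label_simps)

lemma cone_label_plus_cycle:
  "cone_label (Inl i) + cone_label (Inl j) = {2 ^ i + 2 ^ j}"
  by (simp add: cone_label_simps set_plus_def)

lemma cone_label_plus_spoke:
  assumes "{u, v} = {Inl i, Inr j}"
  shows "cone_label u + cone_label v = {2 ^ i, 2 ^ i + Suc j}"
  using assms by (auto simp: cone_label_simps set_plus_def doubleton_eq_iff)

lemma cone_label_edge_sum_inj:
  assumes "1 < m" "(u, v) \<in> cone_E m n" "(x, y) \<in> cone_E m n"
    and eq: "cone_label u + cone_label v = cone_label x + cone_label y"
  shows "{u, v} = {x, y}"
  using assms(1,2)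
proof (cases rule: cone_E_cases)
  case (cycle i j)
  show ?thesis using assms(1,3)
  proof (cases rule: cone_E_cases)
    case (cycle k l)
    then have "2 ^ i + 2 ^ j = (2 ^ k + 2 ^ l :: nat)"
      using eq \<open>u = Inl i\<close> \<open>v = Inl j\<close> by (simp add: cone_label_plus_cycle)
    then have "{i, j} = {k, l}"
      using pow2_add_pow2_eq_imp_eq \<open>i \<noteq> j\<close> \<open>k \<noteq> l\<close> by blast
    then show ?thesis using cycle \<open>u = Inl i\<close> \<open>v = Inl j\<close> by (auto simp: doubleton_eq_iff)
  next
    case (spoke k l)
    then show ?thesis
      using eq cycle by (simp add: cone_label_plus_cycle cone_label_plus_spoke doubleton_eq_iff)
  qed
next
  case (spoke i j)
  show ?thesis using assms(1,3)
  proof (cases rule: cone_E_cases)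
    case (cycle k l)
    then show ?thesis
      using eq spoke by (simp add: cone_label_plus_cycle cone_label_plus_spoke doubleton_eq_iff)
  next
    case spoke': (spoke k l)
    have "{2 ^ i, 2 ^ i + Suc j} = {2 ^ k, 2 ^ k + Suc l :: nat}"
      using eq spoke spoke' by (simp add: cone_label_plus_spoke)
    then have "i = k" "j = l" by (auto simp: doubleton_eq_iff)
    then show ?thesis using spoke spoke' by simp
  qed
qed

lemma weak_iasi_cone_label:
  assumes "1 < m"
  shows "weak_iasi (cone_V m n) (cone_E m n) cone_label"
proof -
  have "card (cone_label u + cone_label v) = max (card (cone_label u)) (card (cone_label v))"
    if "(u, v) \<in> cone_E m n" for u v
    using assms that
    by (cases rule: cone_E_cases)
      (auto simp: card_cone_label cone_label_plus_cycle cone_label_plus_spoke doubleton_eq_iff)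
  moreover have "inj_on cone_label (cone_V m n)"
    by (auto simp: inj_on_def cone_V_def cone_label_simps doubleton_eq_iff)
  moreover have "\<forall>v\<in>cone_V m n. finite (cone_label v) \<and> cone_label v \<noteq> {}"
    by (auto simp: cone_V_def cone_label_simps)
  ultimately show ?thesis
    using cone_label_edge_sum_inj[OF assms] unfolding weak_iasi_def iasi_def by blast
qed

lemma mono_edges_cone_label:
  assumes "1 < m"
  shows "mono_edges (cone_E m n) cone_label = cycle_edges m"
proof
  show "mono_edges (cone_E m n) cone_label \<subseteq> cycle_edges m"
  proof (clarsimp simp: mono_edges_def)
    fix u v assume "(u, v) \<in> cone_E m n" "card (cone_label u + cone_label v) = Suc 0"
    with assms show "{u, v} \<in> cycle_edges m"
      by (cases rule: cone_E_cases) (simp_all add: cone_label_plus_spoke)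
  qed
  show "cycle_edges m \<subseteq> mono_edges (cone_E m n) cone_label"
    by (auto simp: cycle_edges_def cone_label_simps intro!: mono_edgesI cycle_edge_in_cone_E[simplified])
qed

theorem theorem2p27:
  fixes m n :: nat
  assumes "3 \<le> m" and "2 \<le> n"
  shows "sparing_number (cone_V m n) (cone_E m n) = m"
  unfolding sparing_number_def
proof (rule Least_equality)
  have "1 < m" using assms(1) by simp
  then show "\<exists>f. weak_iasi (cone_V m n) (cone_E m n) f \<and> card (mono_edges (cone_E m n) f) = m"
    using weak_iasi_cone_label mono_edges_cone_label card_cycle_edges[OF assms(1)] by metis
next
  fix k assume "\<exists>f. weak_iasi (cone_V m n) (cone_E m n) f \<and> card (mono_edges (cone_E m n) f) = k"
  then show "m \<le> k" using cone_mono_edges_lower_bound[OF assms] by blast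
qed

end
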